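(* Let $k$ be a field, $G$ a finite group and $A$ a $G$-Galois algebra over $k$. Then $A$ is a $(G,\mathrm{Aut}_G(A))$-bi-Galois algebra (i.e. $A$, with the natural action of the group $\mathrm{Aut}_G(A)$, is also an $\mathrm{Aut}_G(A)$-Galois algebra) if and only if $|\mathrm{Aut}_G(A)|=|G|$.
   Context: A $G$-algebra is a $k$-algebra with $G$ acting by algebra automorphisms; $\mathrm{Aut}_G(A)$ is the group of $G$-equivariant $k$-algebra automorphisms of $A$, which acts on $A$ by evaluation, commuting with the $G$-action. For a finite group $H$, an $H$-Galois algebra over $k$ is a nonzero $H$-algebra $A$ with $A^H=k$ such that $A\otimes_kA\to\prod_{h\in H}A$, $x\otimes y\mapsto(x(h\cdot y))_h$, is bijective (equivalently a Galois object for the Hopf algebra $\mathcal O_k(H)$ of functions on $H$). A $(G_1,G_2)$-bi-Galois algebra is an algebra with commuting actions of $G_1$ and $G_2$ making it a $G_1$-Galois algebra and a $G_2$-Galois algebra. *)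

theory Defs
  imports "HOL-Algebra.Group" "HOL.Vector_Spaces"
begin

definition k_algebra :: "('k::field \<Rightarrow> 'a::ring_1 \<Rightarrow> 'a) \<Rightarrow> bool" where
  "k_algebra scale \<longleftrightarrow> Vector_Spaces.vector_space scale \<and>
     (\<forall>c x y. scale c (x * y) = scale c x * y \<and> scale c (x * y) = x * scale c y)"

definition alg_aut :: "('k::field \<Rightarrow> 'a::ring_1 \<Rightarrow> 'a) \<Rightarrow> ('a \<Rightarrow> 'a) \<Rightarrow> bool" where
  "alg_aut scale \<phi> \<longleftrightarrow> Vector_Spaces.linear scale scale \<phi> \<and> bij \<phi> \<and> \<phi> 1 = 1 \<and>
     (\<forall>x y. \<phi> (x * y) = \<phi> x * \<phi> y)"

definition group_algebra_action ::
  "('k::field \<Rightarrow> 'a::ring_1 \<Rightarrow> 'a) \<Rightarrow> ('h, 'm) monoid_scheme \<Rightarrow> ('h \<Rightarrow> 'a \<Rightarrow> 'a) \<Rightarrow> bool" where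
  "group_algebra_action scale H act \<longleftrightarrow> group H \<and>
     act \<one>\<^bsub>H\<^esub> = id \<and>
     (\<forall>g\<in>carrier H. \<forall>h\<in>carrier H. act (g \<otimes>\<^bsub>H\<^esub> h) = act g \<circ> act h) \<and>
     (\<forall>g\<in>carrier H. alg_aut scale (act g))"

text \<open>An element of A \<otimes>_k A is represented by a finite list of pairs ps,
  standing for the sum of x \<otimes> y over (x,y) in ps.  Such an element is zero
  iff it is killed by all f \<otimes> g with f, g linear functionals on A
  (valid over a field).\<close>
definition tensor_zero :: "('k::field \<Rightarrow> 'a::ring_1 \<Rightarrow> 'a) \<Rightarrow> ('a \<times> 'a) list \<Rightarrow> bool" where
  "tensor_zero scale ps \<longleftrightarrow>
     (\<forall>f g. Vector_Spaces.linear scale (*) f \<longrightarrow> Vector_Spaces.linear scale (*) g \<longrightarrow>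
        (\<Sum>(x, y)\<leftarrow>ps. f x * g y) = (0::'k))"

definition galois_map :: "('h \<Rightarrow> 'a \<Rightarrow> 'a) \<Rightarrow> ('a::ring_1 \<times> 'a) list \<Rightarrow> 'h \<Rightarrow> 'a" where
  "galois_map act ps h = (\<Sum>(x, y)\<leftarrow>ps. x * act h y)"

definition galois_algebra ::
  "('k::field \<Rightarrow> 'a::ring_1 \<Rightarrow> 'a) \<Rightarrow> ('h, 'm) monoid_scheme \<Rightarrow> ('h \<Rightarrow> 'a \<Rightarrow> 'a) \<Rightarrow> bool" where
  "galois_algebra scale H act \<longleftrightarrow>
     group_algebra_action scale H act \<and> finite (carrier H) \<and>
     (0::'a) \<noteq> 1 \<and>
     {x. \<forall>h\<in>carrier H. act h x = x} = range (\<lambda>c. scale c 1) \<and>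
     \<comment> \<open>Galois map well defined on A \<otimes> A and injective\<close>
     (\<forall>ps. tensor_zero scale ps \<longleftrightarrow> (\<forall>h\<in>carrier H. galois_map act ps h = 0)) \<and>
     \<comment> \<open>Galois map surjective onto \<Prod>_{h\<in>H} A\<close>
     (\<forall>z. \<exists>ps. \<forall>h\<in>carrier H. galois_map act ps h = z h)"

definition bi_galois_algebra ::
  "('k::field \<Rightarrow> 'a::ring_1 \<Rightarrow> 'a) \<Rightarrow> ('g, 'm) monoid_scheme \<Rightarrow> ('g \<Rightarrow> 'a \<Rightarrow> 'a)
     \<Rightarrow> ('h, 'n) monoid_scheme \<Rightarrow> ('h \<Rightarrow> 'a \<Rightarrow> 'a) \<Rightarrow> bool" where
  "bi_galois_algebra scale G1 act1 G2 act2 \<longleftrightarrow>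
     galois_algebra scale G1 act1 \<and> galois_algebra scale G2 act2 \<and>
     (\<forall>g\<in>carrier G1. \<forall>h\<in>carrier G2. act1 g \<circ> act2 h = act2 h \<circ> act1 g)"

definition Aut_G :: "('k::field \<Rightarrow> 'a::ring_1 \<Rightarrow> 'a) \<Rightarrow> ('g, 'm) monoid_scheme \<Rightarrow> ('g \<Rightarrow> 'a \<Rightarrow> 'a)
     \<Rightarrow> ('a \<Rightarrow> 'a) set" where
  "Aut_G scale G act = {\<phi>. alg_aut scale \<phi> \<and> (\<forall>g\<in>carrier G. \<phi> \<circ> act g = act g \<circ> \<phi>)}"

definition Aut_G_group :: "('k::field \<Rightarrow> 'a::ring_1 \<Rightarrow> 'a) \<Rightarrow> ('g, 'm) monoid_scheme \<Rightarrow> ('g \<Rightarrow> 'a \<Rightarrow> 'a)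
     \<Rightarrow> ('a \<Rightarrow> 'a) monoid" where
  "Aut_G_group scale G act = \<lparr>carrier = Aut_G scale G act, monoid.mult = (\<circ>), one = id\<rparr>"

end

theory Submission
  imports Defs "HOL-Library.Function_Algebras"
begin

text \<open>Regard \<open>End\<^sub>k(A)\<close> as a right \<open>A\<close>-module via \<open>(f z)(a) = f a * z\<close>. For a \<open>G\<close>-Galois algebra
  the preimage of the indicator of \<open>1\<close> under the Galois map, together with the trace, shows that
  the maps \<open>a \<mapsto> g a\<close> form a basis of this module, so \<open>End\<^sub>k(A)\<close> has \<open>k\<close>-dimension
  \<open>|G| dim A\<close>. Hence a right independent family of endomorphisms has at most \<open>|G|\<close> members, and
  is a basis if it has exactly \<open>|G|\<close>. The elements of \<open>Aut\<^sub>G(A)\<close> are right independent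
  (Dedekind's lemma, descended from \<open>k\<close> to \<open>A\<close> by the trace). So if \<open>A\<close> is also
  \<open>Aut\<^sub>G(A)\<close>-Galois, the two bases have the same size; conversely, if \<open>|Aut\<^sub>G(A)| = |G|\<close>
  then \<open>Aut\<^sub>G(A)\<close> is a basis, and every Galois axiom for \<open>Aut\<^sub>G(A)\<close> follows by expanding
  endomorphisms in it.\<close>

lemmas linear_add = module_hom.add[OF linear_iff_module_hom[THEN iffD1]]
lemmas linear_scale = module_hom.scale[OF linear_iff_module_hom[THEN iffD1]]
lemmas linear_sum = module_hom.sum[OF linear_iff_module_hom[THEN iffD1]]
lemmas linear_zero = module_hom.zero[OF linear_iff_module_hom[THEN iffD1]]

lemma vector_space_field: "vector_space ((*) :: 'k::field \<Rightarrow> 'k \<Rightarrow> 'k)"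
  by unfold_locales (auto simp: algebra_simps)

lemma (in vector_space) inj_on_linear_endo_imp_surj_on:
  assumes lin: "Vector_Spaces.linear scale scale f"
    and sub: "subspace V" and span_W: "V \<subseteq> span W" and fin_W: "finite W"
    and into: "f ` V \<subseteq> V" and ker: "\<And>z. z \<in> V \<Longrightarrow> f z = 0 \<Longrightarrow> z = 0"
  shows "V \<subseteq> f ` V"
proof -
  interpret L: Vector_Spaces.linear scale scale f by fact
  obtain B where B: "B \<subseteq> V" "independent B" "V \<subseteq> span B"
    using maximal_independent_subset by blast
  have span_B: "span B = V" using B sub span_minimal[of B V] by auto
  have fin_B: "finite B" using independent_span_bound[OF fin_W B(2)] B(1) span_W by auto
  have inj: "inj_on f V"
  proof (rule inj_onI)
    fix x y assume "x \<in> V" "y \<in> V" "f x = f y"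
    then have "f (x - y) = 0" by (simp add: L.diff)
    moreover have "x - y \<in> V" using \<open>x \<in> V\<close> \<open>y \<in> V\<close> sub subspace_diff by blast
    ultimately show "x = y" using ker by fastforce
  qed
  have indep_fB: "independent (f ` B)"
    using L.independent_injective_image[OF B(2)] inj span_B by simp
  have card_fB: "card (f ` B) = card B" using card_image inj B(1) inj_on_subset by blast
  have fB_V: "f ` B \<subseteq> V" using B(1) into by blast
  show ?thesis
  proof
    fix v assume v: "v \<in> V"
    have "v \<in> span (f ` B)"
    proof (rule ccontr)
      assume v_notin: "v \<notin> span (f ` B)"
      have indep: "independent (insert v (f ` B))" using independent_insertI[OF v_notin indep_fB] .
      have "insert v (f ` B) \<subseteq> span B" using v fB_V span_B by auto
      then have "card (insert v (f ` B)) \<le> card B"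
        using independent_span_bound[OF fin_B indep] by auto
      moreover have "v \<notin> f ` B" using v_notin span_base by blast
      ultimately show False using card_fB fin_B by simp
    qed
    then have "v \<in> f ` span B" using L.span_image by simp
    then show "v \<in> f ` V" using span_B by simp
  qed
qed

definition pointwise_scale :: "('k \<Rightarrow> 'a \<Rightarrow> 'a) \<Rightarrow> 'k \<Rightarrow> ('i \<Rightarrow> 'a) \<Rightarrow> 'i \<Rightarrow> 'a" where
  "pointwise_scale scale c z = (\<lambda>i. scale c (z i))"

lemma vector_space_pointwise_scale:
  "vector_space scale \<Longrightarrow> vector_space (pointwise_scale scale)"
  unfolding vector_space_def pointwise_scale_def by (auto simp: fun_eq_iff)

definition supported_on :: "'i set \<Rightarrow> ('i \<Rightarrow> 'a::zero) set" where
  "supported_on I = {z. \<forall>i. i \<notin> I \<longrightarrow> z i = 0}"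

lemma sum_fun_apply: "(\<Sum>i\<in>A. f i) x = (\<Sum>i\<in>A. f i x)"
  by (induct A rule: infinite_finite_induct) auto

lemma sum_list_as_sum: "(\<Sum>p\<leftarrow>ps. f p) = (\<Sum>i<length ps. f (ps ! i))"
  by (simp add: sum_list_sum_nth atLeast0LessThan)

lemma k_algebra_vector_space: "k_algebra scale \<Longrightarrow> vector_space scale"
  by (simp add: k_algebra_def)

lemma k_algebra_scale_mult_left: "k_algebra scale \<Longrightarrow> scale c x * y = scale c (x * y)"
  by (simp add: k_algebra_def)

lemma k_algebra_scale_mult_right: "k_algebra scale \<Longrightarrow> x * scale c y = scale c (x * y)"
  by (metis k_algebra_def)

lemma k_algebra_functional_one:
  fixes scale :: "'k::field \<Rightarrow> 'a::ring_1 \<Rightarrow> 'a"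
  assumes "k_algebra scale" and "(0::'a) \<noteq> 1"
  shows "\<exists>\<mu>. Vector_Spaces.linear scale (*) \<mu> \<and> \<mu> 1 = 1"
proof -
  interpret vector_space_pair scale "(*) :: 'k \<Rightarrow> 'k \<Rightarrow> 'k"
    by (intro vector_space_pair.intro k_algebra_vector_space assms(1) vector_space_field)
  have "vs1.independent {1::'a}" using assms(2) by (simp add: vs1.independent_insert)
  then show ?thesis using linear_independent_extend[of "{1}" "\<lambda>_. 1"] by auto
qed

lemma k_algebra_scalar_if_central_for_endos:
  fixes scale :: "'k::field \<Rightarrow> 'a::ring_1 \<Rightarrow> 'a"
  assumes alg: "k_algebra scale" and nontriv: "(0::'a) \<noteq> 1"
    and central: "\<And>f. Vector_Spaces.linear scale scale f \<Longrightarrow> f b = b * f 1"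
  shows "b \<in> range (\<lambda>c. scale c 1)"
proof -
  obtain \<mu> where \<mu>: "Vector_Spaces.linear scale (*) \<mu>" "\<mu> 1 = 1"
    using k_algebra_functional_one[OF alg nontriv] by blast
  interpret vector_space scale using alg by (rule k_algebra_vector_space)
  have "Vector_Spaces.linear scale scale (\<lambda>y. scale (\<mu> y) 1)"
    using \<mu>(1) alg by (simp add: linear_iff scale_left_distrib k_algebra_vector_space)
  from central[OF this] have "b = scale (\<mu> b) 1" using \<mu>(2) by simp
  then show ?thesis by blast
qed

lemma tensor_zero_if_endos_vanish:
  fixes scale :: "'k::field \<Rightarrow> 'a::ring_1 \<Rightarrow> 'a"
  assumes alg: "k_algebra scale"
    and vanish: "\<And>f. Vector_Spaces.linear scale scale f \<Longrightarrow> galois_map (\<lambda>f. f) ps f = 0"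
  shows "tensor_zero scale ps"
  unfolding tensor_zero_def
proof (intro allI impI)
  fix f g :: "'a \<Rightarrow> 'k"
  assume f: "Vector_Spaces.linear scale (*) f" and g: "Vector_Spaces.linear scale (*) g"
  interpret vector_space scale using alg by (rule k_algebra_vector_space)
  have "Vector_Spaces.linear scale scale (\<lambda>y. scale (g y) 1)"
    using g alg by (simp add: linear_iff scale_left_distrib k_algebra_vector_space)
  from vanish[OF this] have "(\<Sum>(x, y)\<leftarrow>ps. scale (g y) x) = 0"
    by (simp add: galois_map_def k_algebra_scale_mult_right[OF alg] case_prod_beta)
  then have "f (\<Sum>i<length ps. scale (g (snd (ps ! i))) (fst (ps ! i))) = 0"
    using linear_zero[OF f] by (simp add: sum_list_as_sum case_prod_beta)
  moreover have "f (\<Sum>i<length ps. scale (g (snd (ps ! i))) (fst (ps ! i)))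
      = (\<Sum>i<length ps. f (fst (ps ! i)) * g (snd (ps ! i)))"
    by (simp add: linear_sum[OF f] linear_scale[OF f] mult.commute)
  ultimately show "(\<Sum>(x, y)\<leftarrow>ps. f x * g y) = 0"
    by (simp add: sum_list_as_sum case_prod_beta)
qed

definition right_comb :: "('i \<Rightarrow> 'a::ring_1 \<Rightarrow> 'a) \<Rightarrow> 'i set \<Rightarrow> ('i \<Rightarrow> 'a) \<Rightarrow> 'a \<Rightarrow> 'a" where
  "right_comb e I z a = (\<Sum>i\<in>I. e i a * z i)"

definition right_independent :: "('i \<Rightarrow> 'a::ring_1 \<Rightarrow> 'a) \<Rightarrow> 'i set \<Rightarrow> bool" where
  "right_independent e I \<longleftrightarrow> (\<forall>z. (\<forall>a. right_comb e I z a = 0) \<longrightarrow> (\<forall>i\<in>I. z i = 0))"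

definition scalar_independent ::
    "('k::field \<Rightarrow> 'a::ring_1 \<Rightarrow> 'a) \<Rightarrow> ('i \<Rightarrow> 'a \<Rightarrow> 'a) \<Rightarrow> 'i set \<Rightarrow> bool" where
  "scalar_independent scale e I \<longleftrightarrow>
     (\<forall>c. (\<forall>a. (\<Sum>i\<in>I. scale (c i) (e i a)) = 0) \<longrightarrow> (\<forall>i\<in>I. c i = 0))"

lemma right_independent_coeffs_unique:
  assumes "right_independent e I" "right_comb e I z = right_comb e I z'" "i \<in> I"
  shows "z i = z' i"
proof -
  have "right_comb e I (z - z') a = right_comb e I z a - right_comb e I z' a" for a
    by (simp add: right_comb_def right_diff_distrib sum_subtractf)
  then have "\<forall>a. right_comb e I (z - z') a = 0" using assms(2) by simp
  then have "(z - z') i = 0" using assms(1,3) unfolding right_independent_def by blast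
  then show ?thesis by simp
qed

lemma right_comb_linear:
  assumes alg: "k_algebra scale" and lin: "\<And>i. i \<in> I \<Longrightarrow> Vector_Spaces.linear scale scale (e i)"
  shows "Vector_Spaces.linear scale scale (right_comb e I z)"
proof -
  interpret vector_space scale using alg by (rule k_algebra_vector_space)
  have "right_comb e I z (x + y) = right_comb e I z x + right_comb e I z y" for x y
    unfolding right_comb_def sum.distrib[symmetric]
    by (rule sum.cong) (simp_all add: linear_add[OF lin] distrib_right)
  moreover have "right_comb e I z (scale c x) = scale c (right_comb e I z x)" for c x
    unfolding right_comb_def scale_sum_right
    by (rule sum.cong) (simp_all add: linear_scale[OF lin] k_algebra_scale_mult_left[OF alg])
  ultimately show ?thesis by (simp add: linear_iff vector_space_axioms)
qed

lemma galois_map_right_comb: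
  "galois_map (\<lambda>f. f) ps (right_comb e I z) = (\<Sum>i\<in>I. galois_map e ps i * z i)"
  unfolding galois_map_def right_comb_def sum_list_as_sum
  by (simp add: split_def sum_distrib_left sum_distrib_right mult.assoc sum.swap[of _ "{..<length ps}"])

locale galois_setting =
  fixes scale :: "'k::field \<Rightarrow> 'a::ring_1 \<Rightarrow> 'a"
    and K :: "('g, 'm) monoid_scheme"
    and act :: "'g \<Rightarrow> 'a \<Rightarrow> 'a"
  assumes k_algebra: "k_algebra scale"
    and galois: "galois_algebra scale K act"
begin

sublocale VS: vector_space scale
  by (rule k_algebra_vector_space[OF k_algebra])

sublocale K: group K
  using galois by (simp add: galois_algebra_def group_algebra_action_def)

lemmas scale_mult_left = k_algebra_scale_mult_left[OF k_algebra]
lemmas scale_mult_right = k_algebra_scale_mult_right[OF k_algebra]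

lemma finite_carrier: "finite (carrier K)"
  using galois by (simp add: galois_algebra_def)

lemma zero_neq_one: "(0::'a) \<noteq> 1"
  using galois by (simp add: galois_algebra_def)

lemma fixed_points: "{x. \<forall>h\<in>carrier K. act h x = x} = range (\<lambda>c. scale c 1)"
  using galois by (simp add: galois_algebra_def)

lemma galois_map_surj: "\<exists>ps. \<forall>h\<in>carrier K. galois_map act ps h = z h"
  using galois by (simp add: galois_algebra_def)

lemma act_one: "act \<one>\<^bsub>K\<^esub> = id"
  using galois by (simp add: galois_algebra_def group_algebra_action_def)

lemma act_compose: "g \<in> carrier K \<Longrightarrow> h \<in> carrier K \<Longrightarrow> act (g \<otimes>\<^bsub>K\<^esub> h) = act g \<circ> act h"
  using galois by (simp add: galois_algebra_def group_algebra_action_def)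

lemma act_alg_aut: "g \<in> carrier K \<Longrightarrow> alg_aut scale (act g)"
  using galois by (simp add: galois_algebra_def group_algebra_action_def)

lemma act_linear: "g \<in> carrier K \<Longrightarrow> Vector_Spaces.linear scale scale (act g)"
  using act_alg_aut by (simp add: alg_aut_def)

lemma act_mult: "g \<in> carrier K \<Longrightarrow> act g (x * y) = act g x * act g y"
  using act_alg_aut by (simp add: alg_aut_def)

lemma act_1: "g \<in> carrier K \<Longrightarrow> act g 1 = 1"
  using act_alg_aut by (simp add: alg_aut_def)

lemma act_inv_act: "g \<in> carrier K \<Longrightarrow> act g (act (inv\<^bsub>K\<^esub> g) x) = x"
  using act_compose[of g "inv\<^bsub>K\<^esub> g"] by (simp add: act_one) (metis comp_apply id_apply)

definition dual_basis :: "('a \<times> 'a) list" where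
  "dual_basis = (SOME ps. \<forall>h\<in>carrier K. galois_map act ps h = (if h = \<one>\<^bsub>K\<^esub> then 1 else 0))"

definition dual_len :: nat where "dual_len = length dual_basis"
definition dual_x :: "nat \<Rightarrow> 'a" where "dual_x i = fst (dual_basis ! i)"
definition dual_y :: "nat \<Rightarrow> 'a" where "dual_y i = snd (dual_basis ! i)"

lemma dual_basis_left:
  assumes h: "h \<in> carrier K"
  shows "(\<Sum>i<dual_len. dual_x i * act h (dual_y i)) = (if h = \<one>\<^bsub>K\<^esub> then 1 else 0)"
proof -
  have "\<forall>h\<in>carrier K. galois_map act dual_basis h = (if h = \<one>\<^bsub>K\<^esub> then 1 else 0)"
    unfolding dual_basis_def by (rule someI_ex) (rule galois_map_surj)
  then show ?thesis
    using h by (simp add: galois_map_def sum_list_as_sum split_def dual_len_def dual_x_def dual_y_def)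
qed

lemma dual_basis_right:
  assumes g: "g \<in> carrier K"
  shows "(\<Sum>i<dual_len. act g (dual_x i) * dual_y i) = (if g = \<one>\<^bsub>K\<^esub> then 1 else 0)"
proof -
  have "(\<Sum>i<dual_len. act g (dual_x i) * dual_y i)
      = act g (\<Sum>i<dual_len. dual_x i * act (inv\<^bsub>K\<^esub> g) (dual_y i))"
    using g by (simp add: linear_sum[OF act_linear] act_mult act_inv_act)
  also have "\<dots> = act g (if g = \<one>\<^bsub>K\<^esub> then 1 else 0)"
    using g by (simp add: dual_basis_left)
  also have "\<dots> = (if g = \<one>\<^bsub>K\<^esub> then 1 else 0)"
    using g by (simp add: act_1 linear_zero[OF act_linear])
  finally show ?thesis .
qed

definition trace :: "'a \<Rightarrow> 'a" where
  "trace a = (\<Sum>g\<in>carrier K. act g a)"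

lemma trace_fixed:
  assumes h: "h \<in> carrier K"
  shows "act h (trace a) = trace a"
proof -
  have "act h (trace a) = (\<Sum>g\<in>carrier K. act (h \<otimes>\<^bsub>K\<^esub> g) a)"
    using h by (simp add: trace_def linear_sum[OF act_linear] act_compose)
  also have "\<dots> = trace a"
    using sum.reindex[OF K.inj_on_cmult[OF h], of "\<lambda>g. act g a"] K.surj_const_mult[OF h]
    by (simp add: trace_def comp_def)
  finally show ?thesis .
qed

definition trace_coeff :: "'a \<Rightarrow> 'k" where
  "trace_coeff a = (SOME c. trace a = scale c 1)"

lemma trace_eq_scale: "trace a = scale (trace_coeff a) 1"
proof -
  have "trace a \<in> range (\<lambda>c. scale c 1)"
    using trace_fixed fixed_points by blast
  then show ?thesis unfolding trace_coeff_def by (metis (mono_tags) image_iff someI_ex)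
qed

lemma trace_coeff_linear: "Vector_Spaces.linear scale (*) trace_coeff"
proof -
  have scale_1_inj: "scale c 1 = scale c' 1 \<Longrightarrow> c = c'" for c c'
    using zero_neq_one by simp
  have "trace (a + b) = trace a + trace b" "trace (scale c a) = scale c (trace a)" for a b c
    by (simp_all add: trace_def linear_add[OF act_linear] linear_scale[OF act_linear]
        sum.distrib VS.scale_sum_right)
  then have "trace_coeff (a + b) = trace_coeff a + trace_coeff b"
    and "trace_coeff (scale c a) = c * trace_coeff a" for a b c
    by (auto intro!: scale_1_inj simp: trace_eq_scale[symmetric] VS.scale_left_distrib)
      (metis VS.scale_scale trace_eq_scale)
  then show ?thesis
    by (simp add: linear_iff VS.vector_space_axioms vector_space_field)
qed

definition endo_coeff :: "('a \<Rightarrow> 'a) \<Rightarrow> 'g \<Rightarrow> 'a" where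
  "endo_coeff f g = (\<Sum>i<dual_len. act g (dual_x i) * f (dual_y i))"

lemma right_comb_endo_coeff:
  "right_comb act (carrier K) (endo_coeff f) a
     = (\<Sum>i<dual_len. scale (trace_coeff (a * dual_x i)) (f (dual_y i)))"
proof -
  have "(\<Sum>i<dual_len. scale (trace_coeff (a * dual_x i)) (f (dual_y i)))
      = (\<Sum>i<dual_len. trace (a * dual_x i) * f (dual_y i))"
    by (simp add: trace_eq_scale scale_mult_left)
  also have "\<dots> = (\<Sum>i<dual_len. \<Sum>g\<in>carrier K. act g a * (act g (dual_x i) * f (dual_y i)))"
    by (simp add: trace_def sum_distrib_right act_mult mult.assoc)
  also have "\<dots> = right_comb act (carrier K) (endo_coeff f) a"
    by (simp add: right_comb_def endo_coeff_def sum.swap[of _ "{..<dual_len}"] sum_distrib_left)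
  finally show ?thesis by simp
qed

lemma dual_basis_expansion: "a = (\<Sum>i<dual_len. scale (trace_coeff (a * dual_x i)) (dual_y i))"
proof -
  have "right_comb act (carrier K) (endo_coeff (\<lambda>y. y)) a
      = (\<Sum>g\<in>carrier K. if g = \<one>\<^bsub>K\<^esub> then act g a else 0)"
    unfolding right_comb_def endo_coeff_def by (intro sum.cong) (simp_all add: dual_basis_right)
  also have "\<dots> = a"
    using finite_carrier by (simp add: act_one)
  finally show ?thesis using right_comb_endo_coeff[of "\<lambda>y. y" a] by simp
qed

lemma endo_expansion:
  assumes f: "Vector_Spaces.linear scale scale f"
  shows "f = right_comb act (carrier K) (endo_coeff f)"
proof
  fix a
  have "f a = (\<Sum>i<dual_len. scale (trace_coeff (a * dual_x i)) (f (dual_y i)))"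
    by (subst dual_basis_expansion) (simp add: linear_sum[OF f] linear_scale[OF f])
  then show "f a = right_comb act (carrier K) (endo_coeff f) a"
    by (simp add: right_comb_endo_coeff)
qed

lemma right_independent_act: "right_independent act (carrier K)"
  unfolding right_independent_def
proof (intro allI impI ballI)
  fix z h assume vanish: "\<forall>a. right_comb act (carrier K) z a = 0" and h: "h \<in> carrier K"
  obtain ps where ps: "\<forall>g\<in>carrier K. galois_map act ps g = (if g = h then 1 else 0)"
    using galois_map_surj[of "\<lambda>g. if g = h then 1 else 0"] by blast
  have "0 = galois_map (\<lambda>f. f) ps (right_comb act (carrier K) z)"
    using vanish by (simp add: galois_map_def split_def)
  also have "\<dots> = (\<Sum>g\<in>carrier K. if g = h then z g else 0)"
    unfolding galois_map_right_comb by (intro sum.cong) (simp_all add: ps)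
  also have "\<dots> = z h"
    using finite_carrier h by simp
  finally show "z h = 0" by simp
qed

lemma coordinate_linear: "Vector_Spaces.linear scale (*) (\<lambda>a. trace_coeff (a * dual_x j))"
proof -
  have "Vector_Spaces.linear scale scale (\<lambda>a. a * dual_x j)"
    by (simp add: linear_iff VS.vector_space_axioms distrib_right scale_mult_left)
  from Vector_Spaces.linear_compose[OF this trace_coeff_linear] show ?thesis
    by (simp add: comp_def)
qed

lemma tensor_zero_iff_endos:
  "tensor_zero scale ps \<longleftrightarrow>
     (\<forall>f. Vector_Spaces.linear scale scale f \<longrightarrow> galois_map (\<lambda>f. f) ps f = 0)"
proof (intro iffI allI impI)
  fix f assume tz: "tensor_zero scale ps" and f: "Vector_Spaces.linear scale scale f"
  define coord where "coord j a = trace_coeff (a * dual_x j)" for j a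
  have expand_product: "x * f y = (\<Sum>j<dual_len. \<Sum>l<dual_len.
      scale (coord j x * coord l (f y)) (dual_y j * dual_y l))" for x y
  proof -
    have "x * f y = (\<Sum>j<dual_len. scale (coord j x) (dual_y j))
        * (\<Sum>l<dual_len. scale (coord l (f y)) (dual_y l))"
      unfolding coord_def using dual_basis_expansion by metis
    then show ?thesis
      by (simp add: sum_product scale_mult_left scale_mult_right mult.commute)
  qed
  have coeffs_vanish: "(\<Sum>i<length ps. coord j (fst (ps ! i)) * coord l (f (snd (ps ! i)))) = 0"
    for j l
  proof -
    have "(\<Sum>(x, y)\<leftarrow>ps. coord j x * coord l (f y)) = 0"
      using tz[unfolded tensor_zero_def, rule_format,
          OF coordinate_linear Vector_Spaces.linear_compose[OF f coordinate_linear]]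
      by (simp add: coord_def comp_def)
    then show ?thesis by (simp add: sum_list_as_sum split_def)
  qed
  have "galois_map (\<lambda>f. f) ps f = (\<Sum>i<length ps. fst (ps ! i) * f (snd (ps ! i)))"
    by (simp add: galois_map_def sum_list_as_sum split_def)
  also have "\<dots> = (\<Sum>j<dual_len. \<Sum>l<dual_len. scale
      (\<Sum>i<length ps. coord j (fst (ps ! i)) * coord l (f (snd (ps ! i)))) (dual_y j * dual_y l))"
    by (simp add: expand_product VS.scale_sum_left sum.swap[of _ "{..<length ps}"])
  finally show "galois_map (\<lambda>f. f) ps f = 0"
    by (simp add: coeffs_vanish)
next
  assume "\<forall>f. Vector_Spaces.linear scale scale f \<longrightarrow> galois_map (\<lambda>f. f) ps f = 0"
  then show "tensor_zero scale ps"
    by (intro tensor_zero_if_endos_vanish[OF k_algebra]) blast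
qed

lemma supported_on_finitely_spanned:
  fixes I :: "'i set"
  assumes "finite I"
  shows "\<exists>W. finite W \<and> supported_on I \<subseteq> module.span (pointwise_scale scale) W"
proof -
  interpret FS: vector_space "pointwise_scale scale :: 'k \<Rightarrow> ('i \<Rightarrow> 'a) \<Rightarrow> 'i \<Rightarrow> 'a"
    by (rule vector_space_pointwise_scale[OF VS.vector_space_axioms])
  define unit :: "'i \<Rightarrow> nat \<Rightarrow> 'i \<Rightarrow> 'a" where "unit i j = (\<lambda>i'. if i' = i then dual_y j else 0)"
    for i j
  have "z \<in> FS.span (case_prod unit ` (I \<times> {..<dual_len}))" if z: "z \<in> supported_on I" for z
  proof -
    define s where
      "s = (\<Sum>i\<in>I. \<Sum>j<dual_len. pointwise_scale scale (trace_coeff (z i * dual_x j)) (unit i j))"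
    have "s i' = z i'" for i'
    proof -
      have "s i' = (\<Sum>i\<in>I. \<Sum>j<dual_len.
          if i' = i then scale (trace_coeff (z i * dual_x j)) (dual_y j) else 0)"
        by (simp add: s_def sum_fun_apply pointwise_scale_def unit_def if_distrib cong: if_cong)
      also have "\<dots> = (\<Sum>i\<in>I. if i' = i then z i else 0)"
        by (intro sum.cong refl) (simp flip: dual_basis_expansion)
      also have "\<dots> = z i'"
        using z assms by (auto simp: supported_on_def)
      finally show ?thesis .
    qed
    moreover have "s \<in> FS.span (case_prod unit ` (I \<times> {..<dual_len}))"
      unfolding s_def by (intro FS.span_sum FS.span_scale FS.span_base) auto
    ultimately show ?thesis by (metis ext)
  qed
  then show ?thesis
    using assms by (intro exI[of _ "case_prod unit ` (I \<times> {..<dual_len})"]) auto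
qed

definition transported_coeffs :: "('i \<Rightarrow> 'a \<Rightarrow> 'a) \<Rightarrow> 'i set \<Rightarrow> ('g \<Rightarrow> 'i) \<Rightarrow> ('i \<Rightarrow> 'a) \<Rightarrow> 'i \<Rightarrow> 'a"
  where "transported_coeffs e I \<iota> z i = (if i \<in> \<iota> ` carrier K
      then endo_coeff (right_comb e I z) (inv_into (carrier K) \<iota> i) else 0)"

lemma transported_coeffs_linear:
  "Vector_Spaces.linear (pointwise_scale scale) (pointwise_scale scale) (transported_coeffs e I \<iota>)"
proof -
  interpret FS: vector_space "pointwise_scale scale :: 'k \<Rightarrow> ('i \<Rightarrow> 'a) \<Rightarrow> 'i \<Rightarrow> 'a"
    by (rule vector_space_pointwise_scale[OF VS.vector_space_axioms])
  have "right_comb e I (z + z') = (\<lambda>a. right_comb e I z a + right_comb e I z' a)"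
    and "right_comb e I (\<lambda>i. scale c (z i)) = (\<lambda>a. scale c (right_comb e I z a))" for z z' c
    by (simp_all add: fun_eq_iff right_comb_def distrib_left sum.distrib
        scale_mult_right VS.scale_sum_right)
  moreover have "endo_coeff (\<lambda>a. f a + f' a) g = endo_coeff f g + endo_coeff f' g"
    and "endo_coeff (\<lambda>a. scale c (f a)) g = scale c (endo_coeff f g)" for f f' c g
    by (simp_all add: endo_coeff_def distrib_left sum.distrib scale_mult_right VS.scale_sum_right)
  ultimately have "transported_coeffs e I \<iota> (z + z') i
        = transported_coeffs e I \<iota> z i + transported_coeffs e I \<iota> z' i"
    and "transported_coeffs e I \<iota> (\<lambda>i. scale c (z i)) i = scale c (transported_coeffs e I \<iota> z i)"
    for z z' c i
    by (simp_all add: transported_coeffs_def)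
  then show ?thesis
    by (simp add: linear_iff FS.vector_space_axioms fun_eq_iff pointwise_scale_def)
qed

lemma transported_coeffs_eq_0_imp:
  assumes lin: "\<And>i. i \<in> I \<Longrightarrow> Vector_Spaces.linear scale scale (e i)"
    and indep: "right_independent e I" and inj: "inj_on \<iota> (carrier K)"
    and z: "z \<in> supported_on I" and vanish: "transported_coeffs e I \<iota> z = 0"
  shows "z = 0"
proof -
  have coeff_zero: "endo_coeff (right_comb e I z) g = 0" if "g \<in> carrier K" for g
    using fun_cong[OF vanish, of "\<iota> g"] that inj by (simp add: transported_coeffs_def)
  have "right_comb e I z a = 0" for a
  proof -
    have "right_comb e I z a = right_comb act (carrier K) (endo_coeff (right_comb e I z)) a"
      by (rule fun_cong[OF endo_expansion[OF right_comb_linear[OF k_algebra lin]]])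
    also have "\<dots> = 0" by (simp add: right_comb_def coeff_zero)
    finally show ?thesis .
  qed
  then have "\<forall>i\<in>I. z i = 0"
    using indep unfolding right_independent_def by blast
  then show "z = 0" using z by (auto simp: supported_on_def fun_eq_iff)
qed

text \<open>Onto because \<open>transported_coeffs e I \<iota>\<close> is an injective linear endomorphism of the finite
  dimensional space \<open>supported_on I\<close>.\<close>

lemma transported_coeffs_onto:
  fixes e :: "'i \<Rightarrow> 'a \<Rightarrow> 'a"
  assumes fin: "finite I" and lin: "\<And>i. i \<in> I \<Longrightarrow> Vector_Spaces.linear scale scale (e i)"
    and indep: "right_independent e I"
    and inj: "inj_on \<iota> (carrier K)" and into: "\<iota> ` carrier K \<subseteq> I"
  shows "\<exists>z. \<forall>i\<in>I. w i = transported_coeffs e I \<iota> z i"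
proof -
  interpret FS: vector_space "pointwise_scale scale :: 'k \<Rightarrow> ('i \<Rightarrow> 'a) \<Rightarrow> 'i \<Rightarrow> 'a"
    by (rule vector_space_pointwise_scale[OF VS.vector_space_axioms])
  have maps_into: "transported_coeffs e I \<iota> ` supported_on I \<subseteq> supported_on I"
    using into by (auto simp: transported_coeffs_def supported_on_def image_subset_iff)
  obtain W where "finite W" "supported_on I \<subseteq> FS.span W"
    using supported_on_finitely_spanned[OF fin] by blast
  moreover have "FS.subspace (supported_on I)"
    by (auto simp: FS.subspace_def supported_on_def pointwise_scale_def)
  ultimately have "supported_on I \<subseteq> transported_coeffs e I \<iota> ` supported_on I"
    using FS.inj_on_linear_endo_imp_surj_on[OF transported_coeffs_linear] maps_into
      transported_coeffs_eq_0_imp[OF lin indep inj] by blast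
  moreover have "(\<lambda>i. if i \<in> I then w i else 0) \<in> supported_on I"
    by (simp add: supported_on_def)
  ultimately obtain z where z: "(\<lambda>i. if i \<in> I then w i else 0) = transported_coeffs e I \<iota> z"
    by blast
  have "w i = transported_coeffs e I \<iota> z i" if "i \<in> I" for i
    using fun_cong[OF z, of i] that by simp
  then show ?thesis by blast
qed

lemma card_le_if_right_independent:
  assumes fin: "finite I" and lin: "\<And>i. i \<in> I \<Longrightarrow> Vector_Spaces.linear scale scale (e i)"
    and indep: "right_independent e I"
  shows "card I \<le> card (carrier K)"
proof (rule ccontr)
  assume "\<not> card I \<le> card (carrier K)"
  then obtain \<iota> where \<iota>: "inj_on \<iota> (carrier K)" "\<iota> ` carrier K \<subseteq> I"
    using card_le_inj[OF finite_carrier fin] by fastforce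
  moreover have "\<iota> ` carrier K \<noteq> I"
    using card_image[OF \<iota>(1)] \<open>\<not> card I \<le> card (carrier K)\<close> by auto
  ultimately obtain i\<^sub>0 where i\<^sub>0: "i\<^sub>0 \<in> I" "i\<^sub>0 \<notin> \<iota> ` carrier K" by blast
  have "\<exists>z. \<forall>i\<in>I. (if i = i\<^sub>0 then 1 else 0) = transported_coeffs e I \<iota> z i"
    by (rule transported_coeffs_onto[OF fin _ indep \<iota>]) (fact lin)
  then obtain z where "\<forall>i\<in>I. (if i = i\<^sub>0 then 1 else 0) = transported_coeffs e I \<iota> z i" ..
  from this[rule_format, OF i\<^sub>0(1)] show False
    using i\<^sub>0(2) zero_neq_one by (simp add: transported_coeffs_def)
qed

lemma right_comb_onto_if_card_eq:
  assumes fin: "finite I" and lin: "\<And>i. i \<in> I \<Longrightarrow> Vector_Spaces.linear scale scale (e i)"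
    and indep: "right_independent e I" and card: "card I = card (carrier K)"
    and f: "Vector_Spaces.linear scale scale f"
  shows "\<exists>z. f = right_comb e I z"
proof -
  obtain \<iota> where \<iota>: "bij_betw \<iota> (carrier K) I"
    using finite_same_card_bij[OF finite_carrier fin] card by metis
  have "\<exists>z. \<forall>i\<in>I. endo_coeff f (inv_into (carrier K) \<iota> i) = transported_coeffs e I \<iota> z i"
    by (rule transported_coeffs_onto[OF fin _ indep])
      (simp_all add: lin bij_betw_imp_inj_on[OF \<iota>] bij_betw_imp_surj_on[OF \<iota>])
  then obtain z where z:
    "\<forall>i\<in>I. endo_coeff f (inv_into (carrier K) \<iota> i) = transported_coeffs e I \<iota> z i" ..
  have coeff_eq: "endo_coeff f g = endo_coeff (right_comb e I z) g" if "g \<in> carrier K" for g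
    using z[rule_format, OF bij_betw_apply[OF \<iota> that]] \<iota> that
    by (simp add: transported_coeffs_def bij_betw_def bij_betw_inv_into_left)
  have "f = right_comb act (carrier K) (endo_coeff f)"
    by (rule endo_expansion[OF f])
  also have "\<dots> = right_comb act (carrier K) (endo_coeff (right_comb e I z))"
    unfolding right_comb_def[of act] using coeff_eq by (intro ext sum.cong) simp_all
  also have "\<dots> = right_comb e I z"
    by (rule endo_expansion[OF right_comb_linear[OF k_algebra lin], symmetric])
  finally show ?thesis by blast
qed

abbreviation Aut :: "('a \<Rightarrow> 'a) set" where
  "Aut \<equiv> Aut_G scale K act"

lemma Aut_linear: "\<phi> \<in> Aut \<Longrightarrow> Vector_Spaces.linear scale scale \<phi>"
  by (simp add: Aut_G_def alg_aut_def)

lemma Aut_mult: "\<phi> \<in> Aut \<Longrightarrow> \<phi> (x * y) = \<phi> x * \<phi> y"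
  by (simp add: Aut_G_def alg_aut_def)

lemma Aut_bij: "\<phi> \<in> Aut \<Longrightarrow> bij \<phi>"
  by (simp add: Aut_G_def alg_aut_def)

lemma Aut_one: "\<phi> \<in> Aut \<Longrightarrow> \<phi> 1 = 1"
  by (simp add: Aut_G_def alg_aut_def)

lemma Aut_commute: "\<phi> \<in> Aut \<Longrightarrow> g \<in> carrier K \<Longrightarrow> \<phi> (act g x) = act g (\<phi> x)"
  by (auto simp: Aut_G_def fun_eq_iff)

lemma id_in_Aut: "id \<in> Aut"
  by (simp add: Aut_G_def alg_aut_def VS.linear_id)

lemma comp_in_Aut: "\<phi> \<in> Aut \<Longrightarrow> \<psi> \<in> Aut \<Longrightarrow> \<phi> \<circ> \<psi> \<in> Aut"
  by (auto simp: Aut_G_def alg_aut_def bij_comp fun_eq_iff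
      intro: Vector_Spaces.linear_compose)

lemma inv_in_Aut:
  assumes \<phi>: "\<phi> \<in> Aut"
  shows "inv_into UNIV \<phi> \<in> Aut"
proof -
  have bij: "bij \<phi>" using Aut_bij[OF \<phi>] .
  have inv_eq: "inv_into UNIV \<phi> y = x \<longleftrightarrow> y = \<phi> x" for x y
    using bij_inv_eq_iff[OF bij] by metis
  have \<phi>_inv: "\<phi> (inv_into UNIV \<phi> x) = x" for x
    using bij by (simp add: bij_is_surj surj_f_inv_f)
  have "inv_into UNIV \<phi> (x + y) = inv_into UNIV \<phi> x + inv_into UNIV \<phi> y" for x y
    using inv_eq \<phi>_inv linear_add[OF Aut_linear[OF \<phi>]] by metis
  moreover have "inv_into UNIV \<phi> (scale c x) = scale c (inv_into UNIV \<phi> x)" for c x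
    using inv_eq \<phi>_inv linear_scale[OF Aut_linear[OF \<phi>]] by metis
  moreover have "inv_into UNIV \<phi> (x * y) = inv_into UNIV \<phi> x * inv_into UNIV \<phi> y" for x y
    using inv_eq \<phi>_inv Aut_mult[OF \<phi>] by metis
  moreover have "inv_into UNIV \<phi> 1 = 1"
    using inv_eq Aut_one[OF \<phi>] by metis
  moreover have "inv_into UNIV \<phi> (act g x) = act g (inv_into UNIV \<phi> x)" if "g \<in> carrier K" for g x
    using inv_eq \<phi>_inv Aut_commute[OF \<phi> that] by metis
  ultimately show ?thesis
    using bij_imp_bij_inv[OF bij]
    by (auto simp: Aut_G_def alg_aut_def fun_eq_iff linear_iff VS.vector_space_axioms)
qed

lemma group_Aut_G_group: "group (Aut_G_group scale K act)"
  by (rule groupI)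
    (auto simp: Aut_G_group_def id_in_Aut comp_in_Aut comp_assoc
      intro!: bexI[of _ "inv_into UNIV _"] inv_in_Aut inv_o_cancel bij_is_inj Aut_bij)

text \<open>Descent from \<open>k\<close> to \<open>A\<close>: applying the trace to \<open>\<Sum> e i a * c i = 0\<close> multiplied by
  \<open>dual_x l\<close> gives \<open>k\<close>-linear relations, because the \<open>e i\<close> commute with the action.\<close>

lemma right_independent_if_scalar_independent:
  assumes Aut: "\<And>i. i \<in> I \<Longrightarrow> e i \<in> Aut" and indep: "scalar_independent scale e I"
  shows "right_independent e I"
  unfolding right_independent_def
proof (intro allI impI ballI)
  fix c i assume rel: "\<forall>a. right_comb e I c a = 0" and i: "i \<in> I"
  have "(\<Sum>j\<in>I. scale (trace_coeff (c j * dual_x l)) (e j a)) = 0" for l a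
  proof -
    have "(\<Sum>j\<in>I. scale (trace_coeff (c j * dual_x l)) (e j a))
        = (\<Sum>j\<in>I. e j a * trace (c j * dual_x l))"
      by (simp add: trace_eq_scale scale_mult_right)
    also have "\<dots> = (\<Sum>j\<in>I. \<Sum>g\<in>carrier K.
        act g (e j (act (inv\<^bsub>K\<^esub> g) a) * c j) * act g (dual_x l))"
      unfolding trace_def sum_distrib_left
    proof (intro sum.cong refl)
      fix j g assume "j \<in> I" "g \<in> carrier K"
      then have "e j a = act g (e j (act (inv\<^bsub>K\<^esub> g) a))"
        by (simp add: Aut_commute[OF Aut] act_inv_act)
      then show "e j a * act g (c j * dual_x l)
          = act g (e j (act (inv\<^bsub>K\<^esub> g) a) * c j) * act g (dual_x l)"
        using \<open>g \<in> carrier K\<close> by (simp add: act_mult mult.assoc)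
    qed
    also have "\<dots> = (\<Sum>g\<in>carrier K. act g (right_comb e I c (act (inv\<^bsub>K\<^esub> g) a)) * act g (dual_x l))"
      by (simp add: right_comb_def sum.swap[of _ I] linear_sum[OF act_linear] sum_distrib_right)
    also have "\<dots> = 0"
      by (simp add: rel linear_zero[OF act_linear])
    finally show ?thesis .
  qed
  then have "trace_coeff (c i * dual_x l) = 0" for l
    using indep[unfolded scalar_independent_def, rule_format, of "\<lambda>j. trace_coeff (c j * dual_x l)"] i
    by blast
  then show "c i = 0"
    using dual_basis_expansion[of "c i"] by simp
qed

text \<open>Artin's proof of Dedekind's lemma: replacing \<open>a\<close> by \<open>a * b\<close> yields a relation whose
  coefficients \<open>scale (c \<phi>) (\<phi> b - \<psi> b)\<close> lie in \<open>A\<close>, so the induction runs through descent.\<close>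

lemma scalar_independent_Aut:
  "finite S \<Longrightarrow> S \<subseteq> Aut \<Longrightarrow> scalar_independent scale (\<lambda>\<phi>. \<phi>) S"
proof (induct S rule: finite_induct)
  case empty
  then show ?case by (simp add: scalar_independent_def)
next
  case (insert \<psi> S)
  have S: "S \<subseteq> Aut" and \<psi>: "\<psi> \<in> Aut" using insert by auto
  have right_indep: "right_independent (\<lambda>\<phi>. \<phi>) S"
    using right_independent_if_scalar_independent[of S "\<lambda>\<phi>. \<phi>"] insert S by blast
  show ?case
    unfolding scalar_independent_def
  proof (intro allI impI)
    fix c assume rel: "\<forall>a. (\<Sum>\<phi>\<in>insert \<psi> S. scale (c \<phi>) (\<phi> a)) = 0"
    have rel_S: "(\<Sum>\<phi>\<in>S. scale (c \<phi>) (\<phi> a)) = - scale (c \<psi>) (\<psi> a)" for a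
      using rel insert(1,2) by (simp add: eq_neg_iff_add_eq_0 add.commute)
    have c_S: "c \<phi> = 0" if \<phi>: "\<phi> \<in> S" for \<phi>
    proof -
      obtain b where b: "\<phi> b \<noteq> \<psi> b" using \<phi> insert(2) by (metis ext)
      have "right_comb (\<lambda>\<phi>. \<phi>) S (\<lambda>\<phi>. scale (c \<phi>) (\<phi> b - \<psi> b)) a = 0" for a
      proof -
        have "right_comb (\<lambda>\<phi>. \<phi>) S (\<lambda>\<phi>. scale (c \<phi>) (\<phi> b - \<psi> b)) a
            = (\<Sum>\<phi>\<in>S. scale (c \<phi>) (\<phi> (a * b))) - (\<Sum>\<phi>\<in>S. scale (c \<phi>) (\<phi> a)) * \<psi> b"
          using S by (simp add: right_comb_def scale_mult_right scale_mult_left Aut_mult subset_iff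
              right_diff_distrib VS.scale_right_diff_distrib sum_subtractf sum_distrib_right)
        also have "\<dots> = 0"
          using \<psi> by (simp add: rel_S Aut_mult scale_mult_left)
        finally show ?thesis .
      qed
      then have "scale (c \<phi>) (\<phi> b - \<psi> b) = 0"
        using right_indep \<phi> unfolding right_independent_def by blast
      then show ?thesis using b by simp
    qed
    have "(\<Sum>\<phi>\<in>insert \<psi> S. scale (c \<phi>) (\<phi> 1)) = scale (c \<psi>) 1"
      using insert(1,2) c_S \<psi> by (simp add: Aut_one)
    then have "c \<psi> = 0" using rel zero_neq_one by (metis VS.scale_eq_0_iff)
    then show "\<forall>\<phi>\<in>insert \<psi> S. c \<phi> = 0" using c_S by blast
  qed
qed

lemma basis_change_inverse:
  assumes fin: "finite I" and lin: "\<And>i. i \<in> I \<Longrightarrow> Vector_Spaces.linear scale scale (e i)"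
    and indep: "right_independent e I"
    and W: "\<And>g. g \<in> carrier K \<Longrightarrow> act g = right_comb e I (W g)"
    and i\<^sub>0: "i\<^sub>0 \<in> I" and i: "i \<in> I"
  shows "(\<Sum>g\<in>carrier K. W g i * endo_coeff (e i\<^sub>0) g) = (if i = i\<^sub>0 then 1 else 0)"
proof -
  have "right_comb e I (\<lambda>i. \<Sum>g\<in>carrier K. W g i * endo_coeff (e i\<^sub>0) g) x
      = right_comb e I (\<lambda>i. if i = i\<^sub>0 then 1 else 0) x" for x
  proof -
    have "right_comb e I (\<lambda>i. \<Sum>g\<in>carrier K. W g i * endo_coeff (e i\<^sub>0) g) x
        = right_comb act (carrier K) (endo_coeff (e i\<^sub>0)) x"
      by (simp add: right_comb_def W sum_distrib_left sum_distrib_right mult.assoc sum.swap[of _ I])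
    also have "\<dots> = e i\<^sub>0 x"
      by (rule fun_cong[OF endo_expansion[OF lin[OF i\<^sub>0]], symmetric])
    also have "\<dots> = right_comb e I (\<lambda>i. if i = i\<^sub>0 then 1 else 0) x"
      using fin i\<^sub>0 by (simp add: right_comb_def if_distrib cong: if_cong)
    finally show ?thesis .
  qed
  then show ?thesis
    using right_independent_coeffs_unique[OF indep _ i] by blast
qed

lemma galois_map_onto_if_basis:
  assumes fin: "finite I" and lin: "\<And>i. i \<in> I \<Longrightarrow> Vector_Spaces.linear scale scale (e i)"
    and indep: "right_independent e I"
    and span: "\<And>f. Vector_Spaces.linear scale scale f \<Longrightarrow> \<exists>z. f = right_comb e I z"
  shows "\<exists>ps. \<forall>i\<in>I. galois_map e ps i = w i"
proof -
  have "\<forall>g\<in>carrier K. \<exists>z. act g = right_comb e I z"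
    using span act_linear by blast
  then obtain W where W: "\<And>g. g \<in> carrier K \<Longrightarrow> act g = right_comb e I (W g)"
    by metis
  obtain ps where ps: "\<forall>g\<in>carrier K. galois_map act ps g = (\<Sum>i\<in>I. w i * W g i)"
    using galois_map_surj[of "\<lambda>g. \<Sum>i\<in>I. w i * W g i"] by blast
  have "galois_map e ps i\<^sub>0 = w i\<^sub>0" if i\<^sub>0: "i\<^sub>0 \<in> I" for i\<^sub>0
  proof -
    have "galois_map e ps i\<^sub>0 = galois_map (\<lambda>f. f) ps (right_comb act (carrier K) (endo_coeff (e i\<^sub>0)))"
      by (simp add: galois_map_def flip: endo_expansion[OF lin[OF i\<^sub>0]])
    also have "\<dots> = (\<Sum>g\<in>carrier K. \<Sum>i\<in>I. w i * W g i * endo_coeff (e i\<^sub>0) g)"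
      by (simp add: galois_map_right_comb ps sum_distrib_right)
    also have "\<dots> = (\<Sum>i\<in>I. w i * (\<Sum>g\<in>carrier K. W g i * endo_coeff (e i\<^sub>0) g))"
      by (simp add: sum.swap[of _ "carrier K"] sum_distrib_left mult.assoc)
    also have "\<dots> = w i\<^sub>0"
      using fin i\<^sub>0 by (simp add: basis_change_inverse[OF fin lin indep W i\<^sub>0] if_distrib cong: if_cong)
    finally show ?thesis .
  qed
  then show ?thesis by blast
qed

context
  assumes card_Aut: "card Aut = card (carrier K)"
begin

lemma finite_Aut: "finite Aut"
  using card_Aut finite_carrier K.one_closed by (metis card.infinite card_0_eq empty_iff)

lemma right_independent_Aut: "right_independent (\<lambda>\<phi>. \<phi>) Aut"
  by (intro right_independent_if_scalar_independent scalar_independent_Aut finite_Aut) auto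

lemma endo_in_Aut_span: "Vector_Spaces.linear scale scale f \<Longrightarrow> \<exists>z. f = right_comb (\<lambda>\<phi>. \<phi>) Aut z"
  by (rule right_comb_onto_if_card_eq[OF finite_Aut Aut_linear right_independent_Aut card_Aut])

lemma Aut_fixed_points: "{x. \<forall>\<phi>\<in>Aut. \<phi> x = x} = range (\<lambda>c. scale c 1)"
proof (intro equalityI subsetI)
  fix b assume "b \<in> {x. \<forall>\<phi>\<in>Aut. \<phi> x = x}"
  then have fixed_b: "\<phi> b = b" if "\<phi> \<in> Aut" for \<phi> using that by blast
  show "b \<in> range (\<lambda>c. scale c 1)"
  proof (rule k_algebra_scalar_if_central_for_endos[OF k_algebra zero_neq_one])
    fix f assume "Vector_Spaces.linear scale scale f"
    then obtain z where "f = right_comb (\<lambda>\<phi>. \<phi>) Aut z" using endo_in_Aut_span by blast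
    then show "f b = b * f 1"
      by (simp add: right_comb_def fixed_b Aut_one sum_distrib_left)
  qed
qed (auto simp: linear_scale[OF Aut_linear] Aut_one)

lemma tensor_zero_iff_Aut:
  "tensor_zero scale ps \<longleftrightarrow> (\<forall>\<phi>\<in>Aut. galois_map (\<lambda>\<phi>. \<phi>) ps \<phi> = 0)"
proof
  assume "tensor_zero scale ps"
  then show "\<forall>\<phi>\<in>Aut. galois_map (\<lambda>\<phi>. \<phi>) ps \<phi> = 0"
    using tensor_zero_iff_endos Aut_linear by blast
next
  assume vanish: "\<forall>\<phi>\<in>Aut. galois_map (\<lambda>\<phi>. \<phi>) ps \<phi> = 0"
  show "tensor_zero scale ps"
    unfolding tensor_zero_iff_endos
  proof (intro allI impI)
    fix f assume "Vector_Spaces.linear scale scale f"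
    then obtain z where "f = right_comb (\<lambda>\<phi>. \<phi>) Aut z" using endo_in_Aut_span by blast
    then show "galois_map (\<lambda>f. f) ps f = 0"
      using vanish by (simp add: galois_map_right_comb)
  qed
qed

lemma galois_algebra_Aut: "galois_algebra scale (Aut_G_group scale K act) (\<lambda>\<phi>. \<phi>)"
proof -
  have carrier: "carrier (Aut_G_group scale K act) = Aut"
    by (simp add: Aut_G_group_def)
  have "group_algebra_action scale (Aut_G_group scale K act) (\<lambda>\<phi>. \<phi>)"
    using group_Aut_G_group by (auto simp: group_algebra_action_def Aut_G_group_def Aut_G_def)
  moreover have "\<forall>z. \<exists>ps. \<forall>\<phi>\<in>Aut. galois_map (\<lambda>\<phi>. \<phi>) ps \<phi> = z \<phi>"
    using galois_map_onto_if_basis[OF finite_Aut Aut_linear right_independent_Aut endo_in_Aut_span]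
    by blast
  ultimately show ?thesis
    unfolding galois_algebra_def carrier
    using finite_Aut zero_neq_one Aut_fixed_points tensor_zero_iff_Aut by blast
qed

end

end

theorem lemma2p5:
  fixes scale :: "'k::field \<Rightarrow> 'a::ring_1 \<Rightarrow> 'a"
    and G :: "('g, 'm) monoid_scheme"
    and act :: "'g \<Rightarrow> 'a \<Rightarrow> 'a"
  assumes "k_algebra scale"
    and "galois_algebra scale G act"
  shows "bi_galois_algebra scale G act (Aut_G_group scale G act) (\<lambda>\<phi> x. \<phi> x)
         \<longleftrightarrow> card (Aut_G scale G act) = card (carrier G)"
proof -
  interpret galois_setting scale G act
    using assms by (rule galois_setting.intro)
  have carrier: "carrier (Aut_G_group scale G act) = Aut"
    by (simp add: Aut_G_group_def)
  show ?thesis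
  proof
    assume "bi_galois_algebra scale G act (Aut_G_group scale G act) (\<lambda>\<phi> x. \<phi> x)"
    then interpret Aut_galois: galois_setting scale "Aut_G_group scale G act" "\<lambda>\<phi>. \<phi>"
      using assms(1) by (simp add: bi_galois_algebra_def galois_setting.intro)
    have "card (carrier G) \<le> card Aut"
      using Aut_galois.card_le_if_right_independent[OF finite_carrier act_linear right_independent_act]
      by (simp add: carrier)
    moreover have "card Aut \<le> card (carrier G)"
      using card_le_if_right_independent[OF Aut_galois.finite_carrier Aut_galois.act_linear
          Aut_galois.right_independent_act]
      by (simp add: carrier)
    ultimately show "card Aut = card (carrier G)" by simp
  next
    assume "card Aut = card (carrier G)"
    then have "galois_algebra scale (Aut_G_group scale G act) (\<lambda>\<phi>. \<phi>)"
      by (rule galois_algebra_Aut)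
    then show "bi_galois_algebra scale G act (Aut_G_group scale G act) (\<lambda>\<phi> x. \<phi> x)"
      using assms(2) by (auto simp: bi_galois_algebra_def carrier Aut_G_def)
  qed
qed

end
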